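(* For all integers $n\ge k\ge1$, $$L_{m,\bar{\alpha}}(n+1,k)=L_{m,\bar{\alpha}}(n,k-1)+\bigl(\alpha_k+\alpha_n+(k+n)m\bigr)L_{m,\bar{\alpha}}(n,k),$$ and for all $n\ge0$, $$L_{m,\bar{\alpha}}(n,0)=\prod_{i=0}^{n-1}(\alpha_0+\alpha_i+im).$$
   Context: Fix a real number $m$ and a sequence $\bar{\alpha}=(\alpha_0,\alpha_1,\ldots)$ of real numbers. Let $(x;\bar{\alpha}|m)_n=\prod_{j=0}^{n-1}(x-\alpha_j-jm)$, with $(x;\bar{\alpha}|m)_0=1$. The $\bar{\alpha}$-Whitney numbers of the first kind $w_{m,\bar{\alpha}}(n,k)$ and second kind $W_{m,\bar{\alpha}}(n,k)$ are defined by the polynomial identities $(x;\bar{\alpha}|m)_n=\sum_{k=0}^n w_{m,\bar{\alpha}}(n,k)x^k$ and $x^n=\sum_{k=0}^n W_{m,\bar{\alpha}}(n,k)(x;\bar{\alpha}|m)_k$, both vanishing for $k>n$ or $k<0$. The $\bar{\alpha}$-Whitney-Lah numbers are $$L_{m,\bar{\alpha}}(n,k)=\sum_{j=k}^{n}(-1)^{n-j}\,w_{m,\bar{\alpha}}(n,j)\,W_{m,\bar{\alpha}}(j,k),$$ with $L_{m,\bar{\alpha}}(0,0)=1$ and $L_{m,\bar{\alpha}}(n,k)=0$ for $n<k$ or $k<0$. An empty product equals $1$. *)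

theory Defs
  imports "HOL-Computational_Algebra.Polynomial"
begin

definition gfact :: "real \<Rightarrow> (nat \<Rightarrow> real) \<Rightarrow> nat \<Rightarrow> real poly" where
  "gfact m \<alpha> n = (\<Prod>j<n. [:-(\<alpha> j + real j * m), 1:])"

definition wfirst :: "real \<Rightarrow> (nat \<Rightarrow> real) \<Rightarrow> nat \<Rightarrow> nat \<Rightarrow> real" where
  "wfirst m \<alpha> n k = coeff (gfact m \<alpha> n) k"

definition Wsecond :: "real \<Rightarrow> (nat \<Rightarrow> real) \<Rightarrow> nat \<Rightarrow> nat \<Rightarrow> real" where
  "Wsecond m \<alpha> n = (THE c. (\<forall>k>n. c k = 0) \<and>
      monom 1 n = (\<Sum>k\<le>n. smult (c k) (gfact m \<alpha> k)))"

definition WLah :: "real \<Rightarrow> (nat \<Rightarrow> real) \<Rightarrow> nat \<Rightarrow> nat \<Rightarrow> real" where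
  "WLah m \<alpha> n k = (if k \<le> n then
      (\<Sum>j=k..n. (-1) ^ (n - j) * wfirst m \<alpha> n j * Wsecond m \<alpha> j k) else 0)"

end

theory Submission
  imports Defs
begin

text \<open>
  Write (x)_k for the generalized falling factorial \<open>gfact m \<alpha> k\<close>. By the two defining
  identities of the Whitney numbers,
    sum_k L(n,k) (x)_k = sum_j (-1)^(n-j) w(n,j) x^j = prod_{i<n} (x + \<alpha>_i + i m),
  so the Whitney-Lah numbers are the coordinates of this product in the basis (x)_k of monic
  polynomials of degree k. Multiplying by
    x + \<alpha>_n + n m = (x - \<alpha>_k - k m) + (\<alpha>_k + \<alpha>_n + (k + n) m)
  turns (x)_k into (x)_(k+1) + (\<alpha>_k + \<alpha>_n + (k + n) m) (x)_k; comparing coordinates gives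
  the recurrence, and its case k = 0 gives the product formula for L(n,0).
\<close>

lemma smult_sum_right: "smult a (\<Sum>x\<in>A. f x) = (\<Sum>x\<in>A. smult a (f x))"
  by (induction A rule: infinite_finite_induct) (simp_all add: smult_add_right)

lemma monic_basis_sum_eq_0_imp:
  fixes b :: "nat \<Rightarrow> 'a::comm_ring_1 poly"
  assumes degree_b: "\<And>k. degree (b k) = k" and coeff_b: "\<And>k. coeff (b k) k = 1"
    and "(\<Sum>k\<le>N. smult (c k) (b k)) = 0" and "k \<le> N"
  shows "c k = 0"
  using assms(3,4)
proof (induction N arbitrary: k)
  case 0
  have "b 0 = 1"
    using degree_0_id[of "b 0"] degree_b[of 0] coeff_b[of 0] by (simp add: one_pCons)
  then show ?case using 0 by simp
next
  case (Suc N)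
  have "(\<Sum>k\<le>N. coeff (smult (c k) (b k)) (Suc N)) = 0"
    by (rule sum.neutral) (auto simp: degree_b coeff_eq_0)
  then have "coeff (\<Sum>k\<le>Suc N. smult (c k) (b k)) (Suc N) = c (Suc N)"
    using coeff_b[of "Suc N"] by (simp add: coeff_sum)
  then have top: "c (Suc N) = 0"
    using Suc.prems(1) by (metis coeff_0)
  then have "(\<Sum>k\<le>N. smult (c k) (b k)) = 0"
    using Suc.prems(1) by simp
  then show ?case
    using Suc.IH Suc.prems(2) top by (cases "k = Suc N") auto
qed

lemma monic_basis_coeffs_unique:
  fixes b :: "nat \<Rightarrow> 'a::comm_ring_1 poly"
  assumes "\<And>k. degree (b k) = k" and "\<And>k. coeff (b k) k = 1"
    and "(\<Sum>k\<le>N. smult (c k) (b k)) = (\<Sum>k\<le>N. smult (d k) (b k))" and "k \<le> N"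
  shows "c k = d k"
proof -
  have "(\<Sum>k\<le>N. smult (c k - d k) (b k)) = 0"
    using assms(3) by (simp add: smult_diff_left sum_subtractf)
  then show ?thesis
    using monic_basis_sum_eq_0_imp[OF assms(1,2)] assms(4) by fastforce
qed

lemma monic_basis_expansion_exists:
  fixes b :: "nat \<Rightarrow> 'a::comm_ring_1 poly"
  assumes degree_b: "\<And>k. degree (b k) = k" and coeff_b: "\<And>k. coeff (b k) k = 1"
    and "degree p \<le> n"
  shows "\<exists>c. p = (\<Sum>k\<le>n. smult (c k) (b k))"
  using assms(3)
proof (induction n arbitrary: p)
  case 0
  have "b 0 = 1"
    using degree_0_id[of "b 0"] degree_b[of 0] coeff_b[of 0] by (simp add: one_pCons)
  then have "p = smult (coeff p 0) (b 0)"
    using 0 degree_0_id[of p] by simp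
  then show ?case by auto
next
  case (Suc n)
  define q where "q = p - smult (coeff p (Suc n)) (b (Suc n))"
  have "degree q \<le> n"
  proof (rule degree_le, intro allI impI)
    fix i assume "n < i"
    then show "coeff q i = 0"
      using Suc.prems degree_b[of "Suc n"] coeff_b[of "Suc n"]
      by (cases "i = Suc n") (auto simp: q_def coeff_eq_0)
  qed
  then obtain c where "q = (\<Sum>k\<le>n. smult (c k) (b k))"
    using Suc.IH by blast
  then have "p = (\<Sum>k\<le>n. smult (c k) (b k)) + smult (coeff p (Suc n)) (b (Suc n))"
    by (simp add: q_def algebra_simps)
  then have "p = (\<Sum>k\<le>Suc n. smult ((c(Suc n := coeff p (Suc n))) k) (b k))"
    by simp
  then show ?case by blast
qed

lemma gfact_0 [simp]: "gfact m \<alpha> 0 = 1"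
  by (simp add: gfact_def)

lemma gfact_Suc: "gfact m \<alpha> (Suc n) = gfact m \<alpha> n * [:-(\<alpha> n + real n * m), 1:]"
  by (simp add: gfact_def)

lemma degree_gfact [simp]: "degree (gfact m \<alpha> n) = n"
  by (simp add: gfact_def degree_prod_sum_eq)

lemma coeff_gfact_degree [simp]: "coeff (gfact m \<alpha> n) n = 1"
proof -
  have "lead_coeff (gfact m \<alpha> n) = (\<Prod>j<n. lead_coeff [:-(\<alpha> j + real j * m), 1:])"
    unfolding gfact_def by (rule lead_coeff_prod)
  then show ?thesis by simp
qed

lemma gfact_coeffs_unique:
  "(\<Sum>k\<le>N. smult (c k) (gfact m \<alpha> k)) = (\<Sum>k\<le>N. smult (d k) (gfact m \<alpha> k))
    \<Longrightarrow> k \<le> N \<Longrightarrow> c k = d k"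
  by (rule monic_basis_coeffs_unique[of "gfact m \<alpha>"]) simp_all

lemma Wsecond_eq_0: "n < k \<Longrightarrow> Wsecond m \<alpha> n k = 0"
  and monom_eq_sum_Wsecond: "monom 1 n = (\<Sum>k\<le>n. smult (Wsecond m \<alpha> n k) (gfact m \<alpha> k))"
proof -
  let ?P = "\<lambda>c. (\<forall>k>n. c k = 0) \<and> monom 1 n = (\<Sum>k\<le>n. smult (c k) (gfact m \<alpha> k))"
  obtain c where c: "monom 1 n = (\<Sum>k\<le>n. smult (c k) (gfact m \<alpha> k))"
    using monic_basis_expansion_exists[of "gfact m \<alpha>" "monom 1 n" n]
    by (auto simp: degree_monom_le)
  define c' where "c' k = (if k \<le> n then c k else 0)" for k
  have "?P c'"
    using c by (auto simp: c'_def intro: sum.cong)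
  moreover have "d = c'" if "?P d" for d
  proof
    fix k
    show "d k = c' k"
      using that \<open>?P c'\<close> gfact_coeffs_unique[where m=m and \<alpha>=\<alpha> and N=n and c=d and d=c' and k=k]
      by (cases "k \<le> n") auto
  qed
  ultimately have "?P (Wsecond m \<alpha> n)"
    unfolding Wsecond_def by (rule theI)
  then show "n < k \<Longrightarrow> Wsecond m \<alpha> n k = 0"
    and "monom 1 n = (\<Sum>k\<le>n. smult (Wsecond m \<alpha> n k) (gfact m \<alpha> k))"
    by auto
qed

lemma WLah_eq_0: "n < k \<Longrightarrow> WLah m \<alpha> n k = 0"
  by (simp add: WLah_def)

text \<open>
  The polynomial prod_{j<n} (x + \<alpha>_j + j m) = (-1)^n (-x; \<alpha> | m)_n is encoded as
  \<open>gfact (-m) (\<lambda>j. - \<alpha> j) n\<close>.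
\<close>
lemma coeff_gfact_neg:
  "coeff (gfact (-m) (\<lambda>j. - \<alpha> j) n) j = (-1) ^ (n + j) * wfirst m \<alpha> n j"
proof (induction n arbitrary: j)
  case 0
  then show ?case by (cases j) (simp_all add: wfirst_def)
next
  case (Suc n)
  then show ?case
    by (cases j) (simp_all add: gfact_Suc wfirst_def coeff_pCons algebra_simps)
qed

lemma gfact_neg_eq_sum_monom:
  "gfact (-m) (\<lambda>j. - \<alpha> j) n = (\<Sum>j\<le>n. smult ((-1) ^ (n - j) * wfirst m \<alpha> n j) (monom 1 j))"
proof -
  have "(-1::real) ^ (n + j) = (-1) ^ (n - j)" if "j \<le> n" for j
  proof -
    have "n + j = (n - j) + 2 * j" using that by simp
    then show ?thesis by (simp only: power_add power_mult) simp
  qed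
  then have "coeff (gfact (-m) (\<lambda>j. - \<alpha> j) n) j = (-1) ^ (n - j) * wfirst m \<alpha> n j"
    if "j \<le> n" for j
    using that by (simp add: coeff_gfact_neg)
  then show ?thesis
    using poly_as_sum_of_monoms'[of "gfact (-m) (\<lambda>j. - \<alpha> j) n" n]
    by (simp add: smult_monom)
qed

lemma gfact_neg_eq_sum_WLah:
  "gfact (-m) (\<lambda>j. - \<alpha> j) n = (\<Sum>k\<le>n. smult (WLah m \<alpha> n k) (gfact m \<alpha> k))"
proof -
  let ?a = "\<lambda>j. (-1) ^ (n - j) * wfirst m \<alpha> n j"
  let ?W = "Wsecond m \<alpha>"
  have expand_W: "smult (?a j) (monom 1 j) = (\<Sum>k\<le>n. smult (?a j * ?W j k) (gfact m \<alpha> k))"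
    if "j \<le> n" for j
  proof -
    have "monom 1 j = (\<Sum>k\<le>j. smult (?W j k) (gfact m \<alpha> k))"
      by (rule monom_eq_sum_Wsecond)
    also have "\<dots> = (\<Sum>k\<le>n. smult (?W j k) (gfact m \<alpha> k))"
      by (rule sum.mono_neutral_left) (use that Wsecond_eq_0 in auto)
    finally show ?thesis
      by (simp add: smult_sum_right)
  qed
  have collect_j: "(\<Sum>j\<le>n. ?a j * ?W j k) = WLah m \<alpha> n k" if "k \<le> n" for k
  proof -
    have "(\<Sum>j\<le>n. ?a j * ?W j k) = (\<Sum>j=k..n. ?a j * ?W j k)"
      by (rule sum.mono_neutral_right) (use that Wsecond_eq_0 in auto)
    then show ?thesis
      using that by (simp add: WLah_def)
  qed
  have "gfact (-m) (\<lambda>j. - \<alpha> j) n = (\<Sum>j\<le>n. \<Sum>k\<le>n. smult (?a j * ?W j k) (gfact m \<alpha> k))"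
    by (simp add: gfact_neg_eq_sum_monom expand_W)
  also have "\<dots> = (\<Sum>k\<le>n. smult (\<Sum>j\<le>n. ?a j * ?W j k) (gfact m \<alpha> k))"
    by (subst sum.swap) (simp add: smult_sum)
  also have "\<dots> = (\<Sum>k\<le>n. smult (WLah m \<alpha> n k) (gfact m \<alpha> k))"
    by (simp add: collect_j)
  finally show ?thesis .
qed

lemma WLah_Suc:
  assumes "k \<le> Suc n"
  shows "WLah m \<alpha> (Suc n) k = (if k = 0 then 0 else WLah m \<alpha> n (k - 1))
      + (\<alpha> k + \<alpha> n + (real k + real n) * m) * WLah m \<alpha> n k"
proof -
  let ?L = "WLah m \<alpha> n"
  let ?g = "gfact m \<alpha>"
  let ?c = "\<lambda>k. \<alpha> k + \<alpha> n + (real k + real n) * m"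
  have shift: "?g k * [:\<alpha> n + real n * m, 1:] = ?g (Suc k) + smult (?c k) (?g k)" for k
  proof -
    have "?g (Suc k) + smult (?c k) (?g k) = ?g k * ([:-(\<alpha> k + real k * m), 1:] + [:?c k:])"
      by (simp add: gfact_Suc distrib_left flip: smult_add_left)
    also have "[:-(\<alpha> k + real k * m), 1:] + [:?c k:] = [:\<alpha> n + real n * m, 1:]"
      by (simp add: algebra_simps)
    finally show ?thesis ..
  qed
  have "gfact (-m) (\<lambda>j. - \<alpha> j) (Suc n) = gfact (-m) (\<lambda>j. - \<alpha> j) n * [:\<alpha> n + real n * m, 1:]"
    by (simp add: gfact_Suc add.commute)
  also have "\<dots> = (\<Sum>k\<le>n. smult (?L k) (?g k * [:\<alpha> n + real n * m, 1:]))"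
    by (simp only: gfact_neg_eq_sum_WLah[of m \<alpha> n] sum_distrib_right mult_smult_left)
  also have "\<dots> = (\<Sum>k\<le>n. smult (?L k) (?g (Suc k))) + (\<Sum>k\<le>n. smult (?L k * ?c k) (?g k))"
    by (simp only: shift smult_add_right sum.distrib smult_smult)
  also have "(\<Sum>k\<le>n. smult (?L k) (?g (Suc k)))
      = (\<Sum>k\<le>Suc n. smult (if k = 0 then 0 else ?L (k - 1)) (?g k))"
    by (subst sum.atMost_Suc_shift) simp
  also have "(\<Sum>k\<le>n. smult (?L k * ?c k) (?g k)) = (\<Sum>k\<le>Suc n. smult (?L k * ?c k) (?g k))"
    by (simp add: WLah_eq_0)
  also have "(\<Sum>k\<le>Suc n. smult (if k = 0 then 0 else ?L (k - 1)) (?g k)) + \<dots>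
      = (\<Sum>k\<le>Suc n. smult ((if k = 0 then 0 else ?L (k - 1)) + ?L k * ?c k) (?g k))"
    by (simp only: smult_add_left sum.distrib)
  finally have "(\<Sum>k\<le>Suc n. smult (WLah m \<alpha> (Suc n) k) (?g k))
      = (\<Sum>k\<le>Suc n. smult ((if k = 0 then 0 else ?L (k - 1)) + ?L k * ?c k) (?g k))"
    by (simp only: gfact_neg_eq_sum_WLah)
  from gfact_coeffs_unique[OF this assms] show ?thesis
    by (simp add: mult.commute)
qed

lemma WLah_0_0: "WLah m \<alpha> 0 0 = 1"
  using gfact_neg_eq_sum_WLah[of m \<alpha> 0] by (simp add: one_pCons)

theorem mainTheorem10:
  fixes m :: real and \<alpha> :: "nat \<Rightarrow> real"
  shows "(\<forall>n k. 1 \<le> k \<and> k \<le> n \<longrightarrow>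
            WLah m \<alpha> (n + 1) k = WLah m \<alpha> n (k - 1)
              + (\<alpha> k + \<alpha> n + (real k + real n) * m) * WLah m \<alpha> n k)
       \<and> (\<forall>n. WLah m \<alpha> n 0 = (\<Prod>i<n. \<alpha> 0 + \<alpha> i + real i * m))"
proof (intro conjI allI impI)
  fix n k :: nat
  assume "1 \<le> k \<and> k \<le> n"
  then show "WLah m \<alpha> (n + 1) k = WLah m \<alpha> n (k - 1)
              + (\<alpha> k + \<alpha> n + (real k + real n) * m) * WLah m \<alpha> n k"
    using WLah_Suc[of k n m \<alpha>] by simp
next
  fix n
  show "WLah m \<alpha> n 0 = (\<Prod>i<n. \<alpha> 0 + \<alpha> i + real i * m)"
    by (induction n) (simp_all add: WLah_0_0 WLah_Suc mult.commute)
qed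

end
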